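(* Let $L$ be the generator (with domain $D(L)$) of a conservative Markov process having a stationary distribution $\nu$, and define $\mathcal{E}(f,g)=-\int Lf(x)g(x)\,\nu(dx)$ for $f,g\in D(L)$. If $\mathcal{E}$ is not symmetric, then $\mathrm{Sect}(\mathcal{E})>1$.
   Context: The sector constant $\mathrm{Sect}(\mathcal{E})$ is the infimum of all finite constants $C$ such that $\mathcal{E}(f,g)\le C\,\mathcal{E}(f,f)^{1/2}\mathcal{E}(g,g)^{1/2}$ for all $f,g\in D(L)$, and $\mathrm{Sect}(\mathcal{E})=\infty$ if no such $C$ exists. (Here $\mathcal{E}(f,f)\ge0$.) *)

theory Defs
  imports "HOL-Probability.Probability"
begin

text \<open>A time-homogeneous conservative Markov transition semigroup on the measurable
  space underlying \<open>\<nu>\<close>: each \<open>P t x\<close> is a probability measure (conservativeness),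
  \<open>P t\<close> is a measurable kernel, \<open>P 0\<close> is the identity and Chapman--Kolmogorov holds.\<close>
definition markov_semigroup :: "'a measure \<Rightarrow> (real \<Rightarrow> 'a \<Rightarrow> 'a measure) \<Rightarrow> bool" where
  "markov_semigroup \<nu> P \<longleftrightarrow>
     (\<forall>t\<ge>0. P t \<in> \<nu> \<rightarrow>\<^sub>M prob_algebra \<nu>) \<and>
     (\<forall>x\<in>space \<nu>. P 0 x = return \<nu> x) \<and>
     (\<forall>s\<ge>0. \<forall>t\<ge>0. \<forall>x\<in>space \<nu>. P (s + t) x = P s x \<bind> P t)"

definition stationary :: "'a measure \<Rightarrow> (real \<Rightarrow> 'a \<Rightarrow> 'a measure) \<Rightarrow> bool" where
  "stationary \<nu> P \<longleftrightarrow> prob_space \<nu> \<and> (\<forall>t\<ge>0. \<nu> \<bind> P t = \<nu>)"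

definition trans_op :: "(real \<Rightarrow> 'a \<Rightarrow> 'a measure) \<Rightarrow> real \<Rightarrow> ('a \<Rightarrow> real) \<Rightarrow> 'a \<Rightarrow> real" where
  "trans_op P t f x = (\<integral>y. f y \<partial>(P t x))"

definition sq_integrable :: "'a measure \<Rightarrow> ('a \<Rightarrow> real) \<Rightarrow> bool" where
  "sq_integrable \<nu> f \<longleftrightarrow> f \<in> borel_measurable \<nu> \<and> integrable \<nu> (\<lambda>x. (f x)\<^sup>2)"

text \<open>\<open>g\<close> is \<open>L f\<close> for the (strong) \<open>L\<^sup>2(\<nu>)\<close> generator \<open>L\<close> of the semigroup:
  \<open>(P t f - f)/t \<rightarrow> g\<close> in \<open>L\<^sup>2(\<nu>)\<close> as \<open>t \<rightarrow> 0+\<close>.\<close>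
definition is_generator :: "'a measure \<Rightarrow> (real \<Rightarrow> 'a \<Rightarrow> 'a measure) \<Rightarrow> ('a \<Rightarrow> real) \<Rightarrow> ('a \<Rightarrow> real) \<Rightarrow> bool" where
  "is_generator \<nu> P f g \<longleftrightarrow> sq_integrable \<nu> f \<and> sq_integrable \<nu> g \<and>
     ((\<lambda>t. \<integral>\<^sup>+x. ennreal (((trans_op P t f x - f x) / t - g x)\<^sup>2) \<partial>\<nu>) \<longlongrightarrow> 0) (at_right 0)"

text \<open>Domain \<open>D(L)\<close> and the generator \<open>L\<close> (determined \<open>\<nu>\<close>-a.e.).\<close>
definition gen_dom :: "'a measure \<Rightarrow> (real \<Rightarrow> 'a \<Rightarrow> 'a measure) \<Rightarrow> ('a \<Rightarrow> real) set" where
  "gen_dom \<nu> P = {f. \<exists>g. is_generator \<nu> P f g}"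

definition gen :: "'a measure \<Rightarrow> (real \<Rightarrow> 'a \<Rightarrow> 'a measure) \<Rightarrow> ('a \<Rightarrow> real) \<Rightarrow> ('a \<Rightarrow> real)" where
  "gen \<nu> P f = (SOME g. is_generator \<nu> P f g)"

definition dform :: "'a measure \<Rightarrow> (real \<Rightarrow> 'a \<Rightarrow> 'a measure) \<Rightarrow> ('a \<Rightarrow> real) \<Rightarrow> ('a \<Rightarrow> real) \<Rightarrow> real" where
  "dform \<nu> P f g = - (\<integral>x. gen \<nu> P f x * g x \<partial>\<nu>)"

text \<open>Sector constant: infimum of all finite \<open>C\<close> with the sector bound; \<open>\<infinity>\<close> if none.\<close>
definition sector_const :: "'a measure \<Rightarrow> (real \<Rightarrow> 'a \<Rightarrow> 'a measure) \<Rightarrow> ereal" where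
  "sector_const \<nu> P = Inf (ereal ` {C. \<forall>f\<in>gen_dom \<nu> P. \<forall>g\<in>gen_dom \<nu> P.
      dform \<nu> P f g \<le> C * sqrt (dform \<nu> P f f) * sqrt (dform \<nu> P g g)})"

end

theory Submission
  imports Defs
begin

text \<open>Take \<open>f, g\<close> with \<open>\<E>(f,g) \<noteq> \<E>(g,f)\<close> and, say, \<open>\<E>(f,f) > 0\<close>. Subtracting from \<open>g\<close> the
  multiple of \<open>f\<close> prescribed by the symmetric part of \<open>\<E>\<close> leaves \<open>h\<close> with
  \<open>\<E>(f,h) = -\<E>(h,f) = a > 0\<close> (up to sign). For \<open>w = f + (a/\<E>(h,h)) h\<close> the cross terms of
  \<open>\<E>(w,w)\<close> cancel, so \<open>\<E>(f,w) = \<E>(w,w) = \<E>(f,f) + a\<^sup>2/\<E>(h,h) =: m\<close>, and the sector inequality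
  for \<open>(f,w)\<close> forces \<open>C \<ge> sqrt (m / \<E>(f,f)) > 1\<close>.

  This only uses that \<open>\<E>\<close> is a bilinear form on the linear space \<open>D(L)\<close> with \<open>\<E>(f,f) \<ge> 0\<close>.
  Nonnegativity comes from stationarity: each \<open>P\<^sub>t\<close> is a contraction of \<open>L\<^sup>2(\<nu>)\<close>, so
  \<open>\<integral> (P\<^sub>t f - f) f d\<nu> \<le> 0\<close>; dividing by \<open>t\<close> and letting \<open>t \<rightarrow> 0\<close> gives \<open>\<integral> L f \<cdot> f d\<nu> \<le> 0\<close>.\<close>

section \<open>Sector bounds of nonnegative bilinear forms\<close>

definition sector_bound ::
    "('a \<Rightarrow> real) set \<Rightarrow> (('a \<Rightarrow> real) \<Rightarrow> ('a \<Rightarrow> real) \<Rightarrow> real) \<Rightarrow> real \<Rightarrow> bool" where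
  "sector_bound V E C \<longleftrightarrow> (\<forall>u\<in>V. \<forall>v\<in>V. E u v \<le> C * sqrt (E u u) * sqrt (E v v))"

locale nonneg_bilinear_form =
  fixes V :: "('a \<Rightarrow> real) set" and E :: "('a \<Rightarrow> real) \<Rightarrow> ('a \<Rightarrow> real) \<Rightarrow> real"
  assumes add_closed: "u \<in> V \<Longrightarrow> v \<in> V \<Longrightarrow> (\<lambda>x. u x + v x) \<in> V"
    and scale_closed: "u \<in> V \<Longrightarrow> (\<lambda>x. c * u x) \<in> V"
    and add_left: "u \<in> V \<Longrightarrow> v \<in> V \<Longrightarrow> w \<in> V \<Longrightarrow> E (\<lambda>x. u x + v x) w = E u w + E v w"
    and add_right: "u \<in> V \<Longrightarrow> v \<in> V \<Longrightarrow> w \<in> V \<Longrightarrow> E u (\<lambda>x. v x + w x) = E u v + E u w"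
    and scale_left: "u \<in> V \<Longrightarrow> w \<in> V \<Longrightarrow> E (\<lambda>x. c * u x) w = c * E u w"
    and scale_right: "u \<in> V \<Longrightarrow> w \<in> V \<Longrightarrow> E u (\<lambda>x. c * w x) = c * E u w"
    and nonneg: "u \<in> V \<Longrightarrow> 0 \<le> E u u"
begin

lemma form_lincomb:
  assumes u: "u \<in> V" and v: "v \<in> V"
  shows "(\<lambda>x. u x + c * v x) \<in> V"
    and "E u (\<lambda>x. u x + c * v x) = E u u + c * E u v"
    and "E v (\<lambda>x. u x + c * v x) = E v u + c * E v v"
    and "E (\<lambda>x. u x + c * v x) v = E u v + c * E v v"
    and "E (\<lambda>x. u x + c * v x) (\<lambda>x. u x + c * v x) = E u u + c * (E u v + E v u) + c\<^sup>2 * E v v"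
proof -
  have cv: "(\<lambda>x. c * v x) \<in> V" by (rule scale_closed[OF v])
  show w: "(\<lambda>x. u x + c * v x) \<in> V" using add_closed[OF u cv] by simp
  show uw: "E u (\<lambda>x. u x + c * v x) = E u u + c * E u v"
    using add_right[OF u u cv] scale_right[OF u v] by simp
  show vw: "E v (\<lambda>x. u x + c * v x) = E v u + c * E v v"
    using add_right[OF v u cv] scale_right[OF v v] by simp
  show "E (\<lambda>x. u x + c * v x) v = E u v + c * E v v"
    using add_left[OF u cv v] scale_left[OF v v] by simp
  have "E (\<lambda>x. u x + c * v x) (\<lambda>x. u x + c * v x)
      = E u (\<lambda>x. u x + c * v x) + c * E v (\<lambda>x. u x + c * v x)"
    using add_left[OF u cv w] scale_left[OF v w] by simp
  then show "E (\<lambda>x. u x + c * v x) (\<lambda>x. u x + c * v x) = E u u + c * (E u v + E v u) + c\<^sup>2 * E v v"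
    unfolding uw vw by (simp add: algebra_simps power2_eq_square)
qed

lemma sector_bound_degenerate:
  assumes "sector_bound V E C" "u \<in> V" "v \<in> V" "E u u = 0 \<or> E v v = 0"
  shows "E u v \<le> 0"
proof -
  have "E u v \<le> C * sqrt (E u u) * sqrt (E v v)"
    using assms(1-3) by (auto simp: sector_bound_def)
  then show ?thesis using assms(4) by auto
qed

lemma sector_bound_gap_antisymmetric:
  assumes f: "f \<in> V" and h: "h \<in> V" and pos: "E f f > 0" "E f h > 0" and anti: "E h f = - E f h"
  shows "\<exists>\<delta>>0. \<forall>C. sector_bound V E C \<longrightarrow> 1 + \<delta> \<le> C"
proof (cases "E h h = 0")
  case True
  have "\<not> sector_bound V E C" for C
  proof
    assume "sector_bound V E C"
    then have "E f h \<le> 0" using sector_bound_degenerate[OF _ f h] True by simp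
    then show False using pos by simp
  qed
  then show ?thesis by (intro exI[of _ 1]) auto
next
  case False
  define p b r where "p = E f f" and "b = E f h" and "r = E h h"
  have "r > 0" using nonneg[OF h] False by (simp add: r_def)
  define m where "m = p + b\<^sup>2 / r"
  have "p > 0" "m > p" using pos \<open>r > 0\<close> by (simp_all add: m_def p_def b_def)
  define w where "w = (\<lambda>x. f x + (b / r) * h x)"
  note w_lincomb = form_lincomb[OF f h, of "b / r"]
  have "w \<in> V" unfolding w_def by (rule w_lincomb(1))
  have Efw: "E f w = m"
    unfolding w_def w_lincomb(2) using \<open>r > 0\<close> by (simp add: m_def p_def b_def r_def power2_eq_square)
  have Eww: "E w w = m"
    unfolding w_def w_lincomb(5) using \<open>r > 0\<close> anti
    by (simp add: m_def p_def b_def r_def power2_eq_square)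
  have "sqrt (m / p) \<le> C" if "sector_bound V E C" for C
  proof -
    have "E f w \<le> C * sqrt (E f f) * sqrt (E w w)"
      using that f \<open>w \<in> V\<close> by (auto simp: sector_bound_def)
    then have "m \<le> C * sqrt p * sqrt m"
      using Efw Eww by (simp add: p_def)
    moreover have "sqrt m > 0" and "sqrt m * sqrt m = m"
      using \<open>m > p\<close> \<open>p > 0\<close> by simp_all
    ultimately have "sqrt m * sqrt m \<le> (C * sqrt p) * sqrt m" by linarith
    then have "sqrt m \<le> C * sqrt p"
      using \<open>sqrt m > 0\<close> by (rule mult_right_le_imp_le)
    then have "sqrt m / sqrt p \<le> C"
      using \<open>p > 0\<close> by (simp add: divide_le_eq)
    then show ?thesis by (simp add: real_sqrt_divide)
  qed
  moreover have "sqrt (m / p) > 1"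
    using \<open>m > p\<close> \<open>p > 0\<close> by simp
  ultimately show ?thesis
    by (intro exI[of _ "sqrt (m / p) - 1"]) auto
qed

lemma sector_bound_gap_pos:
  assumes f: "f \<in> V" and g: "g \<in> V" and pos: "E f f > 0" and ne: "E f g \<noteq> E g f"
  shows "\<exists>\<delta>>0. \<forall>C. sector_bound V E C \<longrightarrow> 1 + \<delta> \<le> C"
proof -
  define a where "a = (E f g - E g f) / 2"
  define h where "h = (\<lambda>x. g x + (- (E f g + E g f) / (2 * E f f)) * f x)"
  note h_lincomb = form_lincomb[OF g f, of "- (E f g + E g f) / (2 * E f f)"]
  have "h \<in> V" unfolding h_def by (rule h_lincomb(1))
  have Efh: "E f h = a" and Ehf: "E h f = - a"
    unfolding h_def h_lincomb(3,4) using pos by (simp_all add: a_def field_simps)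
  have "a \<noteq> 0" using ne by (simp add: a_def)
  show ?thesis
  proof (cases "a > 0")
    case True
    then show ?thesis using sector_bound_gap_antisymmetric[OF f \<open>h \<in> V\<close> pos] Efh Ehf by simp
  next
    case False
    have "(\<lambda>x. (-1) * h x) \<in> V" by (rule scale_closed[OF \<open>h \<in> V\<close>])
    moreover have "E f (\<lambda>x. (-1) * h x) = - a" "E (\<lambda>x. (-1) * h x) f = a"
      using scale_right[OF f \<open>h \<in> V\<close>, of "-1"] scale_left[OF \<open>h \<in> V\<close> f, of "-1"] Efh Ehf
      by simp_all
    ultimately show ?thesis
      using sector_bound_gap_antisymmetric[OF f _ pos] False \<open>a \<noteq> 0\<close> by simp
  qed
qed

lemma sector_bound_gap:
  assumes f: "f \<in> V" and g: "g \<in> V" and ne: "E f g \<noteq> E g f"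
  shows "\<exists>\<delta>>0. \<forall>C. sector_bound V E C \<longrightarrow> 1 + \<delta> \<le> C"
proof (cases "E f f > 0 \<or> E g g > 0")
  case True
  then show ?thesis
  proof
    assume "E f f > 0"
    then show ?thesis by (rule sector_bound_gap_pos[OF f g _ ne])
  next
    assume "E g g > 0"
    then show ?thesis by (rule sector_bound_gap_pos[OF g f _ ne[symmetric]])
  qed
next
  case False
  then have ff: "E f f = 0" and gg: "E g g = 0"
    using nonneg[OF f] nonneg[OF g] by auto
  text \<open>Nonnegativity on \<open>f + g\<close> and \<open>f - g\<close> makes \<open>E\<close> antisymmetric on \<open>(f, g)\<close>,
    so one of \<open>E f g\<close>, \<open>E g f\<close> is positive, which no sector bound allows.\<close>
  have "0 \<le> E f g + E g f" "0 \<le> - (E f g + E g f)"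
    using nonneg[OF form_lincomb(1)[OF f g, of 1]] form_lincomb(5)[OF f g, of 1]
      nonneg[OF form_lincomb(1)[OF f g, of "-1"]] form_lincomb(5)[OF f g, of "-1"] ff gg by simp_all
  then have "E g f = - E f g" by linarith
  have "\<not> sector_bound V E C" for C
  proof
    assume "sector_bound V E C"
    then have "E f g \<le> 0" "E g f \<le> 0"
      using sector_bound_degenerate[OF _ f g] sector_bound_degenerate[OF _ g f] ff by simp_all
    then show False using \<open>E g f = - E f g\<close> ne by linarith
  qed
  then show ?thesis by (intro exI[of _ 1]) auto
qed

lemma Inf_sector_bound_gt_1:
  assumes "f \<in> V" "g \<in> V" "E f g \<noteq> E g f"
  shows "1 < Inf (ereal ` {C. sector_bound V E C})"
proof -
  obtain \<delta> where "\<delta> > 0" and gap: "\<And>C. sector_bound V E C \<Longrightarrow> 1 + \<delta> \<le> C"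
    using sector_bound_gap[OF assms] by blast
  have "1 < ereal (1 + \<delta>)" using \<open>\<delta> > 0\<close> by simp
  moreover have "ereal (1 + \<delta>) \<le> Inf (ereal ` {C. sector_bound V E C})"
    by (auto intro!: Inf_greatest gap)
  ultimately show ?thesis by (rule less_le_trans)
qed

end

section \<open>Square-integrable functions\<close>

lemma square_add_le: "((a::real) + b)\<^sup>2 \<le> 2 * a\<^sup>2 + 2 * b\<^sup>2"
  using sum_squares_bound[of a b] by (simp add: power2_sum)

lemma sq_integrable_add:
  assumes "sq_integrable M f" "sq_integrable M g"
  shows "sq_integrable M (\<lambda>x. f x + g x)"
proof -
  have [measurable]: "f \<in> borel_measurable M" "g \<in> borel_measurable M"
    and int: "integrable M (\<lambda>x. (f x)\<^sup>2)" "integrable M (\<lambda>x. (g x)\<^sup>2)"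
    using assms by (auto simp: sq_integrable_def)
  have "integrable M (\<lambda>x. (f x + g x)\<^sup>2)"
  proof (rule Bochner_Integration.integrable_bound)
    show "integrable M (\<lambda>x. 2 * (f x)\<^sup>2 + 2 * (g x)\<^sup>2)"
      using int by auto
    show "AE x in M. norm ((f x + g x)\<^sup>2) \<le> norm (2 * (f x)\<^sup>2 + 2 * (g x)\<^sup>2)"
      using square_add_le by (intro AE_I2) simp
  qed measurable
  then show ?thesis by (simp add: sq_integrable_def)
qed

lemma sq_integrable_scale: "sq_integrable M f \<Longrightarrow> sq_integrable M (\<lambda>x. c * f x)"
  by (auto simp: sq_integrable_def power_mult_distrib)

lemma sq_integrable_diff:
  "sq_integrable M f \<Longrightarrow> sq_integrable M g \<Longrightarrow> sq_integrable M (\<lambda>x. f x - g x)"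
  using sq_integrable_add[of M f "\<lambda>x. (-1) * g x"] sq_integrable_scale[of M g "-1"] by simp

lemma integrable_mult_sq_integrable:
  assumes "sq_integrable M f" "sq_integrable M g"
  shows "integrable M (\<lambda>x. f x * g x)"
proof (rule Bochner_Integration.integrable_bound)
  show "integrable M (\<lambda>x. (f x)\<^sup>2 + (g x)\<^sup>2)"
    using assms by (auto simp: sq_integrable_def)
  show "(\<lambda>x. f x * g x) \<in> borel_measurable M"
    using assms by (auto simp: sq_integrable_def)
  show "AE x in M. norm (f x * g x) \<le> norm ((f x)\<^sup>2 + (g x)\<^sup>2)"
  proof (rule AE_I2)
    fix x
    have "2 * \<bar>f x\<bar> * \<bar>g x\<bar> \<le> (f x)\<^sup>2 + (g x)\<^sup>2"
      using sum_squares_bound[of "\<bar>f x\<bar>" "\<bar>g x\<bar>"] by simp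
    moreover have "0 \<le> \<bar>f x\<bar> * \<bar>g x\<bar>" by simp
    ultimately have "\<bar>f x\<bar> * \<bar>g x\<bar> \<le> (f x)\<^sup>2 + (g x)\<^sup>2" by linarith
    then show "norm (f x * g x) \<le> norm ((f x)\<^sup>2 + (g x)\<^sup>2)"
      by (simp add: abs_mult)
  qed
qed

lemma integral_mult_le_Young:
  assumes f: "sq_integrable M f" and g: "sq_integrable M g" and \<epsilon>: "\<epsilon> > 0"
  shows "(\<integral>x. f x * g x \<partial>M) \<le> \<epsilon> / 2 * (\<integral>x. (f x)\<^sup>2 \<partial>M) + (\<integral>x. (g x)\<^sup>2 \<partial>M) / (2 * \<epsilon>)"
proof -
  have "(\<integral>x. f x * g x \<partial>M) \<le> (\<integral>x. \<epsilon> / 2 * (f x)\<^sup>2 + (g x)\<^sup>2 / (2 * \<epsilon>) \<partial>M)"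
  proof (rule integral_mono)
    show "integrable M (\<lambda>x. f x * g x)" by (rule integrable_mult_sq_integrable[OF f g])
    show "integrable M (\<lambda>x. \<epsilon> / 2 * (f x)\<^sup>2 + (g x)\<^sup>2 / (2 * \<epsilon>))"
      using f g by (auto simp: sq_integrable_def)
    fix x
    have "0 \<le> (\<epsilon> * f x - g x)\<^sup>2" by simp
    then have "2 * \<epsilon> * (f x * g x) \<le> 2 * \<epsilon> * (\<epsilon> / 2 * (f x)\<^sup>2 + (g x)\<^sup>2 / (2 * \<epsilon>))"
      using \<epsilon> by (simp add: power2_diff algebra_simps power2_eq_square)
    then show "f x * g x \<le> \<epsilon> / 2 * (f x)\<^sup>2 + (g x)\<^sup>2 / (2 * \<epsilon>)"
      by (rule mult_left_le_imp_le) (use \<epsilon> in simp)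
  qed
  also have "\<dots> = \<epsilon> / 2 * (\<integral>x. (f x)\<^sup>2 \<partial>M) + (\<integral>x. (g x)\<^sup>2 \<partial>M) / (2 * \<epsilon>)"
    using f g by (simp add: sq_integrable_def)
  finally show ?thesis .
qed

lemma (in prob_space) square_integral_le:
  fixes f :: "'a \<Rightarrow> real"
  assumes "integrable M f" "integrable M (\<lambda>x. (f x)\<^sup>2)"
  shows "(\<integral>x. f x \<partial>M)\<^sup>2 \<le> (\<integral>x. (f x)\<^sup>2 \<partial>M)"
proof -
  have "0 \<le> variance f" by (simp add: integral_nonneg)
  then show ?thesis using variance_eq[OF assms] by simp
qed

lemma tendsto_nn_integral_square_add:
  fixes a b :: "'b \<Rightarrow> 'a \<Rightarrow> real"
  assumes "\<forall>\<^sub>F t in F. a t \<in> borel_measurable M" and "\<forall>\<^sub>F t in F. b t \<in> borel_measurable M"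
    and lim_a: "((\<lambda>t. \<integral>\<^sup>+x. ennreal ((a t x)\<^sup>2) \<partial>M) \<longlongrightarrow> 0) F"
    and lim_b: "((\<lambda>t. \<integral>\<^sup>+x. ennreal ((b t x)\<^sup>2) \<partial>M) \<longlongrightarrow> 0) F"
  shows "((\<lambda>t. \<integral>\<^sup>+x. ennreal ((a t x + b t x)\<^sup>2) \<partial>M) \<longlongrightarrow> 0) F"
proof (rule tendsto_sandwich[OF _ _ tendsto_const])
  have "((\<lambda>t. 2 * (\<integral>\<^sup>+x. ennreal ((a t x)\<^sup>2) \<partial>M) + 2 * (\<integral>\<^sup>+x. ennreal ((b t x)\<^sup>2) \<partial>M))
      \<longlongrightarrow> 2 * 0 + 2 * 0) F"
    by (intro tendsto_add ennreal_tendsto_cmult lim_a lim_b) auto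
  then show "((\<lambda>t. 2 * (\<integral>\<^sup>+x. ennreal ((a t x)\<^sup>2) \<partial>M) + 2 * (\<integral>\<^sup>+x. ennreal ((b t x)\<^sup>2) \<partial>M))
      \<longlongrightarrow> 0) F"
    by simp
  show "\<forall>\<^sub>F t in F. (\<integral>\<^sup>+x. ennreal ((a t x + b t x)\<^sup>2) \<partial>M)
      \<le> 2 * (\<integral>\<^sup>+x. ennreal ((a t x)\<^sup>2) \<partial>M) + 2 * (\<integral>\<^sup>+x. ennreal ((b t x)\<^sup>2) \<partial>M)"
    using assms(1,2)
  proof eventually_elim
    case (elim t)
    note [measurable] = elim
    have "(\<integral>\<^sup>+x. ennreal ((a t x + b t x)\<^sup>2) \<partial>M)
        \<le> (\<integral>\<^sup>+x. ennreal (2 * (a t x)\<^sup>2) + ennreal (2 * (b t x)\<^sup>2) \<partial>M)"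
      by (intro nn_integral_mono) (simp add: square_add_le ennreal_plus[symmetric] del: ennreal_plus)
    also have "\<dots> = 2 * (\<integral>\<^sup>+x. ennreal ((a t x)\<^sup>2) \<partial>M) + 2 * (\<integral>\<^sup>+x. ennreal ((b t x)\<^sup>2) \<partial>M)"
      by (subst nn_integral_add) (auto simp: ennreal_mult nn_integral_cmult)
    finally show ?case .
  qed
qed simp

lemma tendsto_integral_square_of_nn_integral:
  assumes int: "\<forall>\<^sub>F t in F. integrable M (\<lambda>x. (a t x)\<^sup>2)"
    and lim: "((\<lambda>t. \<integral>\<^sup>+x. ennreal ((a t x)\<^sup>2) \<partial>M) \<longlongrightarrow> 0) F"
  shows "((\<lambda>t. \<integral>x. (a t x)\<^sup>2 \<partial>M) \<longlongrightarrow> 0) F"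
proof -
  have "\<forall>\<^sub>F t in F. (\<integral>\<^sup>+x. ennreal ((a t x)\<^sup>2) \<partial>M) = ennreal (\<integral>x. (a t x)\<^sup>2 \<partial>M)"
    using int by eventually_elim (rule nn_integral_eq_integral, auto)
  then have "((\<lambda>t. ennreal (\<integral>x. (a t x)\<^sup>2 \<partial>M)) \<longlongrightarrow> ennreal 0) F"
    using tendsto_cong lim by fastforce
  moreover have "\<forall>\<^sub>F t in F. 0 \<le> (\<integral>x. (a t x)\<^sup>2 \<partial>M)"
    by (simp add: integral_nonneg)
  ultimately show ?thesis
    using tendsto_ennreal_iff[of "\<lambda>t. \<integral>x. (a t x)\<^sup>2 \<partial>M" F 0] by blast
qed

section \<open>Stationary Markov kernels\<close>

locale prob_kernel =
  fixes M :: "'a measure" and K :: "'a \<Rightarrow> 'a measure"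
  assumes kernel: "K \<in> M \<rightarrow>\<^sub>M prob_algebra M"
begin

lemma subprob_kernel: "K \<in> M \<rightarrow>\<^sub>M subprob_algebra M"
  by (rule measurable_prob_algebraD[OF kernel])

lemma prob_space_kernel: "x \<in> space M \<Longrightarrow> prob_space (K x)"
  and sets_kernel: "x \<in> space M \<Longrightarrow> sets (K x) = sets M"
  using measurable_space[OF kernel] by (auto simp: space_prob_algebra)

lemma measurable_kernel: "x \<in> space M \<Longrightarrow> f \<in> M \<rightarrow>\<^sub>M N \<Longrightarrow> f \<in> K x \<rightarrow>\<^sub>M N"
  using measurable_cong_sets[OF sets_kernel refl] by blast

lemma measurable_kernel_integral:
  "(f :: 'a \<Rightarrow> real) \<in> borel_measurable M \<Longrightarrow> (\<lambda>x. \<integral>y. f y \<partial>K x) \<in> borel_measurable M"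
  using measurable_compose[OF subprob_kernel integral_measurable_subprob_algebra] .

lemma measurable_kernel_nn_integral:
  "f \<in> borel_measurable M \<Longrightarrow> (\<lambda>x. \<integral>\<^sup>+y. f y \<partial>K x) \<in> borel_measurable M"
  using measurable_compose[OF subprob_kernel nn_integral_measurable_subprob_algebra] .

end

locale stationary_kernel = prob_kernel +
  assumes invariant: "M \<bind> K = M"
begin

lemma nn_integral_kernel:
  assumes "f \<in> borel_measurable M"
  shows "(\<integral>\<^sup>+x. \<integral>\<^sup>+y. f y \<partial>K x \<partial>M) = (\<integral>\<^sup>+x. f x \<partial>M)"
  using nn_integral_bind[OF assms subprob_kernel, symmetric] by (simp only: invariant)

lemma AE_kernel_sq_integrable:
  assumes f: "sq_integrable M f"
  shows "AE x in M. integrable (K x) (\<lambda>y. (f y)\<^sup>2) \<and> integrable (K x) f"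
proof -
  have [measurable]: "f \<in> borel_measurable M" and int: "integrable M (\<lambda>x. (f x)\<^sup>2)"
    using f by (auto simp: sq_integrable_def)
  have "(\<integral>\<^sup>+x. \<integral>\<^sup>+y. ennreal ((f y)\<^sup>2) \<partial>K x \<partial>M) = (\<integral>\<^sup>+x. ennreal ((f x)\<^sup>2) \<partial>M)"
    by (rule nn_integral_kernel) measurable
  also have "\<dots> < \<infinity>"
    using int by (simp add: integrable_iff_bounded)
  finally have "AE x in M. (\<integral>\<^sup>+y. ennreal ((f y)\<^sup>2) \<partial>K x) \<noteq> \<infinity>"
    by (intro nn_integral_PInf_AE measurable_kernel_nn_integral) auto
  then show ?thesis
  proof (rule AE_mp, intro AE_I2 impI)
    fix x assume x: "x \<in> space M" and fin: "(\<integral>\<^sup>+y. ennreal ((f y)\<^sup>2) \<partial>K x) \<noteq> \<infinity>"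
    have [measurable]: "f \<in> borel_measurable (K x)"
      by (rule measurable_kernel[OF x]) measurable
    have sq: "integrable (K x) (\<lambda>y. (f y)\<^sup>2)"
      unfolding integrable_iff_bounded
    proof
      show "(\<integral>\<^sup>+y. ennreal (norm ((f y)\<^sup>2)) \<partial>K x) < \<infinity>"
        using fin by (simp add: top.not_eq_extremum)
    qed measurable
    moreover have "integrable (K x) f"
      by (rule finite_measure.square_integrable_imp_integrable
          [OF prob_space.finite_measure[OF prob_space_kernel[OF x]] _ sq]) measurable
    ultimately show "integrable (K x) (\<lambda>y. (f y)\<^sup>2) \<and> integrable (K x) f" ..
  qed
qed

lemma kernel_square_integral:
  assumes f: "sq_integrable M f"
  shows "integrable M (\<lambda>x. \<integral>y. (f y)\<^sup>2 \<partial>K x)"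
    and "(\<integral>x. (\<integral>y. (f y)\<^sup>2 \<partial>K x) \<partial>M) = (\<integral>x. (f x)\<^sup>2 \<partial>M)"
proof -
  have [measurable]: "f \<in> borel_measurable M" and int: "integrable M (\<lambda>x. (f x)\<^sup>2)"
    using f by (auto simp: sq_integrable_def)
  have "(\<integral>\<^sup>+x. ennreal (\<integral>y. (f y)\<^sup>2 \<partial>K x) \<partial>M) = (\<integral>\<^sup>+x. \<integral>\<^sup>+y. ennreal ((f y)\<^sup>2) \<partial>K x \<partial>M)"
    using AE_kernel_sq_integrable[OF f]
    by (intro nn_integral_cong_AE) (auto intro!: nn_integral_eq_integral[symmetric])
  also have "\<dots> = (\<integral>\<^sup>+x. ennreal ((f x)\<^sup>2) \<partial>M)"
    by (rule nn_integral_kernel) measurable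
  also have "\<dots> = ennreal (\<integral>x. (f x)\<^sup>2 \<partial>M)"
    using int by (auto intro!: nn_integral_eq_integral)
  finally have "(\<integral>\<^sup>+x. ennreal (\<integral>y. (f y)\<^sup>2 \<partial>K x) \<partial>M) = ennreal (\<integral>x. (f x)\<^sup>2 \<partial>M)" .
  moreover have "(\<lambda>x. \<integral>y. (f y)\<^sup>2 \<partial>K x) \<in> borel_measurable M"
    by (rule measurable_kernel_integral) measurable
  ultimately have "integrable M (\<lambda>x. \<integral>y. (f y)\<^sup>2 \<partial>K x)
      \<and> (\<integral>x. (\<integral>y. (f y)\<^sup>2 \<partial>K x) \<partial>M) = (\<integral>x. (f x)\<^sup>2 \<partial>M)"
    using nn_integral_eq_integrable[of "\<lambda>x. \<integral>y. (f y)\<^sup>2 \<partial>K x" M "\<integral>x. (f x)\<^sup>2 \<partial>M"]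
    by (auto intro!: integral_nonneg)
  then show "integrable M (\<lambda>x. \<integral>y. (f y)\<^sup>2 \<partial>K x)"
    and "(\<integral>x. (\<integral>y. (f y)\<^sup>2 \<partial>K x) \<partial>M) = (\<integral>x. (f x)\<^sup>2 \<partial>M)" by auto
qed

lemma AE_square_kernel_integral_le:
  assumes "sq_integrable M f"
  shows "AE x in M. (\<integral>y. f y \<partial>K x)\<^sup>2 \<le> (\<integral>y. (f y)\<^sup>2 \<partial>K x)"
proof (rule AE_mp[OF AE_kernel_sq_integrable[OF assms]], rule AE_I2, rule impI)
  fix x assume "x \<in> space M" "integrable (K x) (\<lambda>y. (f y)\<^sup>2) \<and> integrable (K x) f"
  then show "(\<integral>y. f y \<partial>K x)\<^sup>2 \<le> (\<integral>y. (f y)\<^sup>2 \<partial>K x)"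
    using prob_space.square_integral_le[OF prob_space_kernel] by blast
qed

lemma sq_integrable_kernel_integral:
  assumes f: "sq_integrable M f"
  shows "sq_integrable M (\<lambda>x. \<integral>y. f y \<partial>K x)"
proof -
  have [measurable]: "(\<lambda>x. \<integral>y. f y \<partial>K x) \<in> borel_measurable M"
    using f by (intro measurable_kernel_integral) (simp add: sq_integrable_def)
  have "integrable M (\<lambda>x. (\<integral>y. f y \<partial>K x)\<^sup>2)"
  proof (rule Bochner_Integration.integrable_bound[OF kernel_square_integral(1)[OF f]])
    show "AE x in M. norm ((\<integral>y. f y \<partial>K x)\<^sup>2) \<le> norm (\<integral>y. (f y)\<^sup>2 \<partial>K x)"
      using AE_square_kernel_integral_le[OF f] by eventually_elim auto
  qed measurable
  then show ?thesis by (simp add: sq_integrable_def)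
qed

lemma AE_kernel_integral_add:
  assumes "sq_integrable M f" "sq_integrable M g"
  shows "AE x in M. (\<integral>y. f y + g y \<partial>K x) = (\<integral>y. f y \<partial>K x) + (\<integral>y. g y \<partial>K x)"
  using AE_kernel_sq_integrable[OF assms(1)] AE_kernel_sq_integrable[OF assms(2)]
  by eventually_elim simp

lemma integral_kernel_integral_mult_le:
  assumes f: "sq_integrable M f"
  shows "(\<integral>x. (\<integral>y. f y \<partial>K x) * f x \<partial>M) \<le> (\<integral>x. (f x)\<^sup>2 \<partial>M)"
proof -
  have "(\<integral>x. (\<integral>y. f y \<partial>K x) * f x \<partial>M) \<le> (\<integral>x. ((\<integral>y. (f y)\<^sup>2 \<partial>K x) + (f x)\<^sup>2) / 2 \<partial>M)"
  proof (rule integral_mono_AE)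
    show "integrable M (\<lambda>x. (\<integral>y. f y \<partial>K x) * f x)"
      by (rule integrable_mult_sq_integrable[OF sq_integrable_kernel_integral[OF f] f])
    show "integrable M (\<lambda>x. ((\<integral>y. (f y)\<^sup>2 \<partial>K x) + (f x)\<^sup>2) / 2)"
      using kernel_square_integral(1)[OF f] f by (auto simp: sq_integrable_def)
    show "AE x in M. (\<integral>y. f y \<partial>K x) * f x \<le> ((\<integral>y. (f y)\<^sup>2 \<partial>K x) + (f x)\<^sup>2) / 2"
      using AE_square_kernel_integral_le[OF f]
    proof eventually_elim
      case (elim x)
      have "2 * ((\<integral>y. f y \<partial>K x) * f x) \<le> (\<integral>y. f y \<partial>K x)\<^sup>2 + (f x)\<^sup>2"
        using sum_squares_bound[of "\<integral>y. f y \<partial>K x" "f x"] by (simp add: mult.assoc)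
      with elim have "2 * ((\<integral>y. f y \<partial>K x) * f x) \<le> (\<integral>y. (f y)\<^sup>2 \<partial>K x) + (f x)\<^sup>2"
        by linarith
      then show ?case by simp
    qed
  qed
  also have "\<dots> = (\<integral>x. (f x)\<^sup>2 \<partial>M)"
    using kernel_square_integral[OF f] f by (simp add: sq_integrable_def)
  finally show ?thesis .
qed

end

section \<open>The \<open>L\<^sup>2\<close>-generator of a family of stationary kernels\<close>

definition gen_residual ::
    "(real \<Rightarrow> 'a \<Rightarrow> 'a measure) \<Rightarrow> ('a \<Rightarrow> real) \<Rightarrow> ('a \<Rightarrow> real) \<Rightarrow> real \<Rightarrow> 'a \<Rightarrow> real" where
  "gen_residual P f g t x = (trans_op P t f x - f x) / t - g x"

lemma is_generator_iff_gen_residual: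
  "is_generator \<nu> P f g \<longleftrightarrow> sq_integrable \<nu> f \<and> sq_integrable \<nu> g \<and>
     ((\<lambda>t. \<integral>\<^sup>+x. ennreal ((gen_residual P f g t x)\<^sup>2) \<partial>\<nu>) \<longlongrightarrow> 0) (at_right 0)"
  by (simp add: is_generator_def gen_residual_def)

locale stationary_kernel_family =
  fixes \<nu> :: "'a measure" and P :: "real \<Rightarrow> 'a \<Rightarrow> 'a measure"
  assumes stationary_kernel: "t > 0 \<Longrightarrow> stationary_kernel \<nu> (P t)"
begin

lemma sq_integrable_trans_op:
  "t > 0 \<Longrightarrow> sq_integrable \<nu> f \<Longrightarrow> sq_integrable \<nu> (trans_op P t f)"
  unfolding trans_op_def[abs_def]
  by (rule stationary_kernel.sq_integrable_kernel_integral[OF stationary_kernel])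

lemma sq_integrable_gen_residual:
  assumes t: "t > 0" and f: "sq_integrable \<nu> f" and g: "sq_integrable \<nu> g"
  shows "sq_integrable \<nu> (gen_residual P f g t)"
proof -
  have "gen_residual P f g t = (\<lambda>x. (1 / t) * (trans_op P t f x - f x) - g x)"
    by (simp add: gen_residual_def fun_eq_iff)
  then show ?thesis
    by (simp only:) (intro sq_integrable_diff sq_integrable_scale sq_integrable_trans_op t f g)
qed

lemma eventually_measurable_gen_residual:
  "sq_integrable \<nu> f \<Longrightarrow> sq_integrable \<nu> g \<Longrightarrow>
    \<forall>\<^sub>F t in at_right 0. gen_residual P f g t \<in> borel_measurable \<nu>"
  using eventually_at_right_less[of 0]
  by eventually_elim (use sq_integrable_gen_residual in \<open>simp add: sq_integrable_def\<close>)

lemma is_generator_unique: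
  assumes g1: "is_generator \<nu> P f g1" and g2: "is_generator \<nu> P f g2"
  shows "AE x in \<nu>. g1 x = g2 x"
proof -
  have sq: "sq_integrable \<nu> f" "sq_integrable \<nu> g1" "sq_integrable \<nu> g2"
    and lim1: "((\<lambda>t. \<integral>\<^sup>+x. ennreal ((- gen_residual P f g1 t x)\<^sup>2) \<partial>\<nu>) \<longlongrightarrow> 0) (at_right 0)"
    and lim2: "((\<lambda>t. \<integral>\<^sup>+x. ennreal ((gen_residual P f g2 t x)\<^sup>2) \<partial>\<nu>) \<longlongrightarrow> 0) (at_right 0)"
    using g1 g2 by (simp_all add: is_generator_iff_gen_residual)
  have "((\<lambda>t. \<integral>\<^sup>+x. ennreal ((- gen_residual P f g1 t x + gen_residual P f g2 t x)\<^sup>2) \<partial>\<nu>)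
      \<longlongrightarrow> 0) (at_right 0)"
    using eventually_measurable_gen_residual[OF sq(1,2)] eventually_measurable_gen_residual[OF sq(1,3)]
    by (intro tendsto_nn_integral_square_add lim1 lim2) (auto elim: eventually_mono)
  then have "(\<integral>\<^sup>+x. ennreal ((g1 x - g2 x)\<^sup>2) \<partial>\<nu>) = 0"
    by (simp add: gen_residual_def tendsto_const_iff)
  then have "AE x in \<nu>. ennreal ((g1 x - g2 x)\<^sup>2) = 0"
    using sq by (subst (asm) nn_integral_0_iff_AE) (auto simp: sq_integrable_def)
  then show ?thesis by eventually_elim simp
qed

lemma is_generator_add:
  assumes f: "is_generator \<nu> P f Lf" and g: "is_generator \<nu> P g Lg"
  shows "is_generator \<nu> P (\<lambda>x. f x + g x) (\<lambda>x. Lf x + Lg x)"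
proof -
  have sq: "sq_integrable \<nu> f" "sq_integrable \<nu> Lf" "sq_integrable \<nu> g" "sq_integrable \<nu> Lg"
    using f g by (simp_all add: is_generator_iff_gen_residual)
  have "\<forall>\<^sub>F t in at_right 0.
      (\<integral>\<^sup>+x. ennreal ((gen_residual P (\<lambda>x. f x + g x) (\<lambda>x. Lf x + Lg x) t x)\<^sup>2) \<partial>\<nu>)
    = (\<integral>\<^sup>+x. ennreal ((gen_residual P f Lf t x + gen_residual P g Lg t x)\<^sup>2) \<partial>\<nu>)"
    using eventually_at_right_less[of 0]
  proof eventually_elim
    case (elim t)
    show ?case
      using stationary_kernel.AE_kernel_integral_add[OF stationary_kernel[OF elim] sq(1,3)]
      by (intro nn_integral_cong_AE, eventually_elim)
        (simp add: gen_residual_def trans_op_def add_divide_distrib diff_divide_distrib algebra_simps)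
  qed
  moreover have "((\<lambda>t. \<integral>\<^sup>+x. ennreal ((gen_residual P f Lf t x + gen_residual P g Lg t x)\<^sup>2) \<partial>\<nu>)
      \<longlongrightarrow> 0) (at_right 0)"
    using f g eventually_measurable_gen_residual[OF sq(1,2)] eventually_measurable_gen_residual[OF sq(3,4)]
    by (intro tendsto_nn_integral_square_add) (simp_all add: is_generator_iff_gen_residual)
  ultimately show ?thesis
    using sq by (simp add: is_generator_iff_gen_residual sq_integrable_add tendsto_cong)
qed

lemma is_generator_scale:
  assumes f: "is_generator \<nu> P f Lf"
  shows "is_generator \<nu> P (\<lambda>x. c * f x) (\<lambda>x. c * Lf x)"
proof -
  have sq: "sq_integrable \<nu> f" "sq_integrable \<nu> Lf"
    and lim: "((\<lambda>t. \<integral>\<^sup>+x. ennreal ((gen_residual P f Lf t x)\<^sup>2) \<partial>\<nu>) \<longlongrightarrow> 0) (at_right 0)"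
    using f by (simp_all add: is_generator_iff_gen_residual)
  have residual: "gen_residual P (\<lambda>x. c * f x) (\<lambda>x. c * Lf x) t x = c * gen_residual P f Lf t x"
    for t x by (simp add: gen_residual_def trans_op_def right_diff_distrib)
  have "\<forall>\<^sub>F t in at_right 0.
      (\<integral>\<^sup>+x. ennreal ((gen_residual P (\<lambda>x. c * f x) (\<lambda>x. c * Lf x) t x)\<^sup>2) \<partial>\<nu>)
    = ennreal (c\<^sup>2) * (\<integral>\<^sup>+x. ennreal ((gen_residual P f Lf t x)\<^sup>2) \<partial>\<nu>)"
    using eventually_measurable_gen_residual[OF sq]
  proof eventually_elim
    case (elim t)
    note [measurable] = elim
    show ?case
      by (simp add: residual power_mult_distrib ennreal_mult nn_integral_cmult)
  qed
  moreover have "((\<lambda>t. ennreal (c\<^sup>2) * (\<integral>\<^sup>+x. ennreal ((gen_residual P f Lf t x)\<^sup>2) \<partial>\<nu>))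
      \<longlongrightarrow> 0) (at_right 0)"
    using ennreal_tendsto_cmult[OF _ lim] by simp
  ultimately show ?thesis
    using sq by (simp add: is_generator_iff_gen_residual sq_integrable_scale tendsto_cong)
qed

end

section \<open>The form \<open>\<E>\<close> on the domain of the generator\<close>

lemma is_generator_gen: "f \<in> gen_dom \<nu> P \<Longrightarrow> is_generator \<nu> P f (gen \<nu> P f)"
  unfolding gen_dom_def gen_def by (simp add: someI_ex)

lemma integrable_gen_mult:
  "f \<in> gen_dom \<nu> P \<Longrightarrow> g \<in> gen_dom \<nu> P \<Longrightarrow> integrable \<nu> (\<lambda>x. gen \<nu> P f x * g x)"
  using is_generator_gen[of f] is_generator_gen[of g]
  by (intro integrable_mult_sq_integrable) (auto simp: is_generator_def)

context stationary_kernel_family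
begin

lemma is_generator_dissipative:
  assumes "is_generator \<nu> P f g"
  shows "(\<integral>x. g x * f x \<partial>\<nu>) \<le> 0"
proof -
  have f: "sq_integrable \<nu> f" and g: "sq_integrable \<nu> g"
    and lim: "((\<lambda>t. \<integral>\<^sup>+x. ennreal ((gen_residual P f g t x)\<^sup>2) \<partial>\<nu>) \<longlongrightarrow> 0) (at_right 0)"
    using assms by (simp_all add: is_generator_iff_gen_residual)
  have bound: "(\<integral>x. g x * f x \<partial>\<nu>)
      \<le> \<epsilon> / 2 * (\<integral>x. (f x)\<^sup>2 \<partial>\<nu>) + (\<integral>x. (gen_residual P f g t x)\<^sup>2 \<partial>\<nu>) / (2 * \<epsilon>)"
    if t: "t > 0" and \<epsilon>: "\<epsilon> > 0" for t \<epsilon>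
  proof -
    let ?T = "trans_op P t f" and ?R = "gen_residual P f g t"
    have T: "sq_integrable \<nu> ?T" by (rule sq_integrable_trans_op[OF t f])
    have R: "sq_integrable \<nu> (\<lambda>x. - ?R x)"
      using sq_integrable_scale[OF sq_integrable_gen_residual[OF t f g], of "-1"] by simp
    have "g x * f x = (?T x * f x - (f x)\<^sup>2) / t + f x * - ?R x" for x
      using t by (simp add: gen_residual_def field_simps power2_eq_square)
    then have "(\<integral>x. g x * f x \<partial>\<nu>)
        = ((\<integral>x. ?T x * f x \<partial>\<nu>) - (\<integral>x. (f x)\<^sup>2 \<partial>\<nu>)) / t + (\<integral>x. f x * - ?R x \<partial>\<nu>)"
      using integrable_mult_sq_integrable[OF T f] integrable_mult_sq_integrable[OF f R] f
      by (simp add: sq_integrable_def)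
    also have "\<dots> \<le> 0 + (\<integral>x. f x * - ?R x \<partial>\<nu>)"
      using stationary_kernel.integral_kernel_integral_mult_le[OF stationary_kernel[OF t] f] t
      by (simp add: trans_op_def divide_nonpos_pos)
    also have "\<dots> \<le> \<epsilon> / 2 * (\<integral>x. (f x)\<^sup>2 \<partial>\<nu>) + (\<integral>x. (gen_residual P f g t x)\<^sup>2 \<partial>\<nu>) / (2 * \<epsilon>)"
      using integral_mult_le_Young[OF f R \<epsilon>] by simp
    finally show ?thesis .
  qed
  have residual_lim: "((\<lambda>t. \<integral>x. (gen_residual P f g t x)\<^sup>2 \<partial>\<nu>) \<longlongrightarrow> 0) (at_right 0)"
    using eventually_at_right_less[of 0] sq_integrable_gen_residual[OF _ f g]
    by (intro tendsto_integral_square_of_nn_integral[OF _ lim])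
      (auto simp: sq_integrable_def elim: eventually_mono)
  have bound_lim: "(\<integral>x. g x * f x \<partial>\<nu>) \<le> \<epsilon> / 2 * (\<integral>x. (f x)\<^sup>2 \<partial>\<nu>)" if "\<epsilon> > 0" for \<epsilon>
  proof (rule tendsto_le[OF trivial_limit_at_right_real _ tendsto_const])
    show "\<forall>\<^sub>F t in at_right 0. (\<integral>x. g x * f x \<partial>\<nu>)
        \<le> \<epsilon> / 2 * (\<integral>x. (f x)\<^sup>2 \<partial>\<nu>) + (\<integral>x. (gen_residual P f g t x)\<^sup>2 \<partial>\<nu>) / (2 * \<epsilon>)"
      using eventually_at_right_less[of 0] by eventually_elim (rule bound[OF _ that])
    show "((\<lambda>t. \<epsilon> / 2 * (\<integral>x. (f x)\<^sup>2 \<partial>\<nu>) + (\<integral>x. (gen_residual P f g t x)\<^sup>2 \<partial>\<nu>) / (2 * \<epsilon>))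
        \<longlongrightarrow> \<epsilon> / 2 * (\<integral>x. (f x)\<^sup>2 \<partial>\<nu>)) (at_right 0)"
      using tendsto_add[OF tendsto_const tendsto_divide_zero[OF residual_lim]] by simp
  qed
  show ?thesis
  proof (rule tendsto_le[OF trivial_limit_at_right_real _ tendsto_const])
    show "\<forall>\<^sub>F \<epsilon> in at_right 0. (\<integral>x. g x * f x \<partial>\<nu>) \<le> \<epsilon> / 2 * (\<integral>x. (f x)\<^sup>2 \<partial>\<nu>)"
      using eventually_at_right_less[of 0] by eventually_elim (rule bound_lim)
    show "((\<lambda>\<epsilon>. \<epsilon> / 2 * (\<integral>x. (f x)\<^sup>2 \<partial>\<nu>)) \<longlongrightarrow> 0) (at_right 0)"
      by (rule tendsto_mult_left_zero[OF tendsto_divide_zero[OF tendsto_ident_at]])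
  qed
qed

lemma gen_dom_add: "f \<in> gen_dom \<nu> P \<Longrightarrow> g \<in> gen_dom \<nu> P \<Longrightarrow> (\<lambda>x. f x + g x) \<in> gen_dom \<nu> P"
  using is_generator_add[OF is_generator_gen is_generator_gen] unfolding gen_dom_def by blast

lemma gen_dom_scale: "f \<in> gen_dom \<nu> P \<Longrightarrow> (\<lambda>x. c * f x) \<in> gen_dom \<nu> P"
  using is_generator_scale[OF is_generator_gen] unfolding gen_dom_def by blast

lemma dform_add_left:
  assumes f: "f \<in> gen_dom \<nu> P" and g: "g \<in> gen_dom \<nu> P" and h: "h \<in> gen_dom \<nu> P"
  shows "dform \<nu> P (\<lambda>x. f x + g x) h = dform \<nu> P f h + dform \<nu> P g h"
proof -
  have "(\<integral>x. gen \<nu> P (\<lambda>x. f x + g x) x * h x \<partial>\<nu>) = (\<integral>x. gen \<nu> P f x * h x + gen \<nu> P g x * h x \<partial>\<nu>)"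
  proof (rule integral_cong_AE)
    show "(\<lambda>x. gen \<nu> P (\<lambda>x. f x + g x) x * h x) \<in> borel_measurable \<nu>"
      by (intro borel_measurable_integrable integrable_gen_mult gen_dom_add f g h)
    show "(\<lambda>x. gen \<nu> P f x * h x + gen \<nu> P g x * h x) \<in> borel_measurable \<nu>"
      by (intro borel_measurable_add borel_measurable_integrable integrable_gen_mult f g h)
    show "AE x in \<nu>. gen \<nu> P (\<lambda>x. f x + g x) x * h x = gen \<nu> P f x * h x + gen \<nu> P g x * h x"
      using is_generator_unique[OF is_generator_gen[OF gen_dom_add[OF f g]]
          is_generator_add[OF is_generator_gen[OF f] is_generator_gen[OF g]]]
      by eventually_elim (simp add: distrib_right)
  qed
  also have "\<dots> = (\<integral>x. gen \<nu> P f x * h x \<partial>\<nu>) + (\<integral>x. gen \<nu> P g x * h x \<partial>\<nu>)"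
    by (intro Bochner_Integration.integral_add integrable_gen_mult f g h)
  finally show ?thesis by (simp add: dform_def)
qed

lemma dform_scale_left:
  assumes f: "f \<in> gen_dom \<nu> P" and h: "h \<in> gen_dom \<nu> P"
  shows "dform \<nu> P (\<lambda>x. c * f x) h = c * dform \<nu> P f h"
proof -
  have "(\<integral>x. gen \<nu> P (\<lambda>x. c * f x) x * h x \<partial>\<nu>) = (\<integral>x. c * (gen \<nu> P f x * h x) \<partial>\<nu>)"
  proof (rule integral_cong_AE)
    show "(\<lambda>x. gen \<nu> P (\<lambda>x. c * f x) x * h x) \<in> borel_measurable \<nu>"
      by (intro borel_measurable_integrable integrable_gen_mult gen_dom_scale f h)
    show "(\<lambda>x. c * (gen \<nu> P f x * h x)) \<in> borel_measurable \<nu>"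
      by (intro borel_measurable_times borel_measurable_const borel_measurable_integrable
          integrable_gen_mult f h)
    show "AE x in \<nu>. gen \<nu> P (\<lambda>x. c * f x) x * h x = c * (gen \<nu> P f x * h x)"
      using is_generator_unique[OF is_generator_gen[OF gen_dom_scale[OF f]]
          is_generator_scale[OF is_generator_gen[OF f], of c]]
      by eventually_elim simp
  qed
  then show ?thesis by (simp add: dform_def)
qed

lemma dform_add_right:
  assumes f: "f \<in> gen_dom \<nu> P" and g: "g \<in> gen_dom \<nu> P" and h: "h \<in> gen_dom \<nu> P"
  shows "dform \<nu> P f (\<lambda>x. g x + h x) = dform \<nu> P f g + dform \<nu> P f h"
proof -
  have "(\<integral>x. gen \<nu> P f x * (g x + h x) \<partial>\<nu>) = (\<integral>x. gen \<nu> P f x * g x + gen \<nu> P f x * h x \<partial>\<nu>)"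
    by (simp add: distrib_left)
  also have "\<dots> = (\<integral>x. gen \<nu> P f x * g x \<partial>\<nu>) + (\<integral>x. gen \<nu> P f x * h x \<partial>\<nu>)"
    by (intro Bochner_Integration.integral_add integrable_gen_mult f g h)
  finally show ?thesis by (simp add: dform_def)
qed

lemma dform_scale_right: "dform \<nu> P f (\<lambda>x. c * h x) = c * dform \<nu> P f h"
  by (simp add: dform_def mult.left_commute)

lemma dform_nonneg: "f \<in> gen_dom \<nu> P \<Longrightarrow> 0 \<le> dform \<nu> P f f"
  using is_generator_dissipative[OF is_generator_gen] by (simp add: dform_def)

sublocale dirichlet_form: nonneg_bilinear_form "gen_dom \<nu> P" "dform \<nu> P"
proof
  fix u v w c
  assume u: "u \<in> gen_dom \<nu> P" and v: "v \<in> gen_dom \<nu> P" and w: "w \<in> gen_dom \<nu> P"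
  show "(\<lambda>x. u x + v x) \<in> gen_dom \<nu> P" by (rule gen_dom_add[OF u v])
  show "(\<lambda>x. c * u x) \<in> gen_dom \<nu> P" by (rule gen_dom_scale[OF u])
  show "dform \<nu> P (\<lambda>x. u x + v x) w = dform \<nu> P u w + dform \<nu> P v w" by (rule dform_add_left[OF u v w])
  show "dform \<nu> P u (\<lambda>x. v x + w x) = dform \<nu> P u v + dform \<nu> P u w" by (rule dform_add_right[OF u v w])
  show "dform \<nu> P (\<lambda>x. c * u x) w = c * dform \<nu> P u w" by (rule dform_scale_left[OF u w])
  show "dform \<nu> P u (\<lambda>x. c * w x) = c * dform \<nu> P u w" by (rule dform_scale_right)
  show "0 \<le> dform \<nu> P u u" by (rule dform_nonneg[OF u])
qed

end

lemma stationary_kernel_family_of_markov_semigroup: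
  assumes "markov_semigroup \<nu> P" and "stationary \<nu> P"
  shows "stationary_kernel_family \<nu> P"
  using assms
  unfolding stationary_kernel_family_def stationary_kernel_def stationary_kernel_axioms_def
    prob_kernel_def markov_semigroup_def stationary_def
  by simp

theorem proposition3p1:
  fixes \<nu> :: "'a measure" and P :: "real \<Rightarrow> 'a \<Rightarrow> 'a measure"
  assumes "markov_semigroup \<nu> P"
    and "stationary \<nu> P"
    and "\<not> (\<forall>f\<in>gen_dom \<nu> P. \<forall>g\<in>gen_dom \<nu> P. dform \<nu> P f g = dform \<nu> P g f)"
  shows "sector_const \<nu> P > 1"
proof -
  interpret stationary_kernel_family \<nu> P
    using assms(1,2) by (rule stationary_kernel_family_of_markov_semigroup)
  obtain f g where "f \<in> gen_dom \<nu> P" "g \<in> gen_dom \<nu> P" "dform \<nu> P f g \<noteq> dform \<nu> P g f"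
    using assms(3) by blast
  then have "1 < Inf (ereal ` {C. sector_bound (gen_dom \<nu> P) (dform \<nu> P) C})"
    by (rule dirichlet_form.Inf_sector_bound_gt_1)
  then show ?thesis by (simp only: sector_const_def sector_bound_def)
qed

end
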